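(* The set $\mathbb F_0$ of origami numbers is a subfield of $\mathbb R$, and it is closed under the operation $\alpha\mapsto\sqrt{1+\alpha^2}$: if $\alpha\in\mathbb F_0$ then $\sqrt{1+\alpha^2}\in\mathbb F_0$.
   Context: An origami pair is a pair $(\mathcal P,\mathcal L)$ where $\mathcal P\subset\mathbb R^2$ is a set of points and $\mathcal L$ is a collection of lines in $\mathbb R^2$ such that: (i) the intersection point of any two non-parallel lines of $\mathcal L$ lies in $\mathcal P$; (ii) for any two distinct points of $\mathcal P$, the line through them is in $\mathcal L$; (iii) for any two distinct points of $\mathcal P$, the perpendicular bisector of the segment joining them is in $\mathcal L$; (iv) if $L_1,L_2\in\mathcal L$, then every line equidistant from $L_1$ and $L_2$ is in $\mathcal L$ (the midline if they are parallel, the angle bisectors if they intersect); (v) if $L_1,L_2\in\mathcal L$, then the mirror reflection of $L_2$ across $L_1$ is in $\mathcal L$. A set $\mathcal P\subset\mathbb R^2$ is closed under origami constructions if there is a collection of lines $\mathcal L$ with $(\mathcal P,\mathcal L)$ an origami pair. The set of origami constructible points is $\mathcal P_0=\bigcap\{\mathcal P : (0,0),(0,1)\in\mathcal P \text{ and } \mathcal P \text{ is closed under origami constructions}\}$. The set of origami numbers is $\mathbb F_0=\{\alpha\in\mathbb R : \exists v_1,v_2\in\mathcal P_0,\ |\alpha|=\operatorname{dist}(v_1,v_2)\}$. *)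

theory Defs
  imports "HOL-Analysis.Analysis"
begin

type_synonym point = "real \<times> real"

definition line_eq :: "real \<Rightarrow> real \<Rightarrow> real \<Rightarrow> point set" where
  "line_eq a b c = {(x, y). a * x + b * y = c}"

definition is_line :: "point set \<Rightarrow> bool" where
  "is_line L \<longleftrightarrow> (\<exists>a b c. (a, b) \<noteq> (0, 0) \<and> L = line_eq a b c)"

definition line_through :: "point \<Rightarrow> point \<Rightarrow> point set" where
  "line_through p q = {((1 - t) * fst p + t * fst q, (1 - t) * snd p + t * snd q) | t. True}"

definition perp_bisector :: "point \<Rightarrow> point \<Rightarrow> point set" where
  "perp_bisector p q = {z. dist z p = dist z q}"

definition reflect_pt :: "real \<Rightarrow> real \<Rightarrow> real \<Rightarrow> point \<Rightarrow> point" where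
  "reflect_pt a b c z =
     (let t = (a * fst z + b * snd z - c) / (a\<^sup>2 + b\<^sup>2)
      in (fst z - 2 * a * t, snd z - 2 * b * t))"

text \<open>A line M equidistant from two distinct lines L1, L2: every point of M has the same
  distance to L1 and to L2 (midline if parallel, angle bisectors if intersecting).\<close>
definition equidistant_line :: "point set \<Rightarrow> point set \<Rightarrow> point set \<Rightarrow> bool" where
  "equidistant_line L1 L2 M \<longleftrightarrow> is_line M \<and> (\<forall>z\<in>M. infdist z L1 = infdist z L2)"

definition origami_pair :: "point set \<Rightarrow> point set set \<Rightarrow> bool" where
  "origami_pair P \<L> \<longleftrightarrow>
     (\<forall>L\<in>\<L>. is_line L) \<and>
     (\<forall>L1\<in>\<L>. \<forall>L2\<in>\<L>. \<forall>p. L1 \<noteq> L2 \<and> p \<in> L1 \<and> p \<in> L2 \<longrightarrow> p \<in> P) \<and>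
     (\<forall>p\<in>P. \<forall>q\<in>P. p \<noteq> q \<longrightarrow> line_through p q \<in> \<L>) \<and>
     (\<forall>p\<in>P. \<forall>q\<in>P. p \<noteq> q \<longrightarrow> perp_bisector p q \<in> \<L>) \<and>
     (\<forall>L1\<in>\<L>. \<forall>L2\<in>\<L>. \<forall>M. L1 \<noteq> L2 \<and> equidistant_line L1 L2 M \<longrightarrow> M \<in> \<L>) \<and>
     (\<forall>L1\<in>\<L>. \<forall>L2\<in>\<L>. \<forall>a b c. (a, b) \<noteq> (0, 0) \<and> L1 = line_eq a b c
         \<longrightarrow> reflect_pt a b c ` L2 \<in> \<L>)"

definition origami_closed :: "point set \<Rightarrow> bool" where
  "origami_closed P \<longleftrightarrow> (\<exists>\<L>. origami_pair P \<L>)"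

definition origami_points :: "point set" where
  "origami_points = \<Inter>{P. (0, 0) \<in> P \<and> (0, 1) \<in> P \<and> origami_closed P}"

definition origami_numbers :: "real set" where
  "origami_numbers = {\<alpha>. \<exists>v1\<in>origami_points. \<exists>v2\<in>origami_points. \<bar>\<alpha>\<bar> = dist v1 v2}"

definition real_subfield :: "real set \<Rightarrow> bool" where
  "real_subfield S \<longleftrightarrow> 0 \<in> S \<and> 1 \<in> S \<and>
     (\<forall>x\<in>S. \<forall>y\<in>S. x + y \<in> S \<and> x - y \<in> S \<and> x * y \<in> S) \<and>
     (\<forall>x\<in>S. x \<noteq> 0 \<longrightarrow> inverse x \<in> S)"

end

theory Submission
  imports Defs
begin

(*
  Fix an origami pair (P, L) with (0, 0), (0, 1) in P. Perpendicular bisectors, one angle bisector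
  and the reflection of the line y = 1/2 in y = 1/4 put both axes, the line y = 1/2 and the
  diagonal into L. Every point of P lies on two lines of L, so P is closed under reflection in the
  lines of L. On the x-axis this gives a field: midpoints come from perpendicular bisectors, sums
  from reflections in vertical lines, products and inverses from intersecting vertical lines with
  lines through the origin, and sqrt (1 + a^2) from reflecting (1, a) onto the x-axis in the
  bisector of the angle it makes with the axis. The same operations give every distance
  sqrt (x^2 + y^2) = |x| sqrt (1 + (y/x)^2) between points of P, so the origami numbers are
  exactly the common abscissas of all such P, an intersection of fields closed under the map.
*)

lemma dist_point_eq: "dist (x, y) (u, v) = sqrt ((x - u)\<^sup>2 + (y - v)\<^sup>2)"
  for x y u v :: real
  by (simp add: dist_Pair_Pair dist_real_def)

lemma infdist_line_eq:
  assumes ab: "(a, b) \<noteq> (0, 0)"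
  shows "infdist (x, y) (line_eq a b c) = \<bar>a * x + b * y - c\<bar> / sqrt (a\<^sup>2 + b\<^sup>2)"
proof -
  define n where "n = sqrt (a\<^sup>2 + b\<^sup>2)"
  have n2: "a\<^sup>2 + b\<^sup>2 > 0"
    using ab by (simp add: sum_power2_gt_zero_iff)
  then have "n > 0" and n_square: "n\<^sup>2 = a\<^sup>2 + b\<^sup>2"
    by (simp_all add: n_def)
  define t where "t = (a * x + b * y - c) / (a\<^sup>2 + b\<^sup>2)"
  define f where "f = (x - a * t, y - b * t)"
  have t: "(a\<^sup>2 + b\<^sup>2) * t = a * x + b * y - c"
    using ab by (auto simp: t_def)
  have f_mem: "f \<in> line_eq a b c"
    using t by (simp add: f_def line_eq_def algebra_simps power2_eq_square)
  have "dist (x, y) f = sqrt ((a\<^sup>2 + b\<^sup>2) * t\<^sup>2)"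
    by (simp add: f_def dist_point_eq algebra_simps power2_eq_square)
  also have "\<dots> = n * \<bar>t\<bar>"
    by (simp add: n_def real_sqrt_mult)
  also have "\<dots> = \<bar>a * x + b * y - c\<bar> / n"
    using \<open>n > 0\<close>
    by (simp add: t_def abs_divide flip: n_square) (simp add: field_simps power2_eq_square)
  finally have dist_f: "dist (x, y) f = \<bar>a * x + b * y - c\<bar> / n" .
  have lower: "\<bar>a * x + b * y - c\<bar> / n \<le> dist (x, y) w" if w_mem: "w \<in> line_eq a b c" for w
  proof -
    obtain u v where w: "w = (u, v)" and uv: "a * u + b * v = c"
      using w_mem by (auto simp: line_eq_def)
    have "\<bar>a * x + b * y - c\<bar> = \<bar>(a, b) \<bullet> (x - u, y - v)\<bar>"
      using uv by (simp add: algebra_simps)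
    also have "\<dots> \<le> n * dist (x, y) w"
      using Cauchy_Schwarz_ineq2[of "(a, b)" "(x - u, y - v)"]
      by (simp add: w n_def norm_Pair dist_point_eq)
    finally show ?thesis
      using \<open>n > 0\<close> by (simp add: field_simps)
  qed
  have "infdist (x, y) (line_eq a b c) = \<bar>a * x + b * y - c\<bar> / n"
  proof (rule antisym)
    show "infdist (x, y) (line_eq a b c) \<le> \<bar>a * x + b * y - c\<bar> / n"
      using infdist_le[OF f_mem, of "(x, y)"] dist_f by simp
    show "\<bar>a * x + b * y - c\<bar> / n \<le> infdist (x, y) (line_eq a b c)"
    proof -
      have "line_eq a b c \<noteq> {}"
        using f_mem by blast
      then show ?thesis
        using lower by (simp add: infdist_notempty cINF_greatest)
    qed
  qed
  then show ?thesis
    by (simp add: n_def)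
qed

lemma parallel_if_common_normal:
  fixes A B d1 d2 e1 e2 :: real
  assumes "(A, B) \<noteq> (0, 0)" "(d1, d2) \<noteq> (0, 0)"
    and "A * d1 + B * d2 = 0" "A * e1 + B * e2 = 0"
  shows "\<exists>t. e1 = t * d1 \<and> e2 = t * d2"
proof -
  have cross: "e1 * d2 = e2 * d1"
  proof (cases "A = 0")
    case True
    then show ?thesis
      using assms by auto
  next
    case False
    have "A * (e1 * d2 - e2 * d1) = (A * e1) * d2 - (A * d1) * e2"
      by (simp add: algebra_simps)
    also have "\<dots> = 0"
      using assms(3,4) by (simp add: algebra_simps flip: eq_neg_iff_add_eq_0)
    finally show ?thesis
      using False by simp
  qed
  show ?thesis
  proof (cases "d1 = 0")
    case True
    then show ?thesis
      using assms cross by (auto intro!: exI[of _ "e2 / d2"])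
  next
    case False
    then show ?thesis
      using cross by (auto intro!: exI[of _ "e1 / d1"] simp: field_simps)
  qed
qed

lemma line_through_eq_line_eq:
  assumes "(x1, y1) \<noteq> (x2, y2)" "(A, B) \<noteq> (0, 0)"
    and "A * x1 + B * y1 = C" "A * x2 + B * y2 = C"
  shows "line_through (x1, y1) (x2, y2) = line_eq A B C"
proof
  show "line_through (x1, y1) (x2, y2) \<subseteq> line_eq A B C"
  proof
    fix z assume "z \<in> line_through (x1, y1) (x2, y2)"
    then obtain t where z: "z = ((1 - t) * x1 + t * x2, (1 - t) * y1 + t * y2)"
      by (auto simp: line_through_def)
    have "A * fst z + B * snd z = (1 - t) * (A * x1 + B * y1) + t * (A * x2 + B * y2)"
      by (simp add: z algebra_simps)
    then show "z \<in> line_eq A B C"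
      using assms(3,4) by (cases z) (simp add: line_eq_def algebra_simps)
  qed
  show "line_eq A B C \<subseteq> line_through (x1, y1) (x2, y2)"
  proof
    fix z assume "z \<in> line_eq A B C"
    then obtain x y where z: "z = (x, y)" and "A * x + B * y = C"
      by (auto simp: line_eq_def)
    then have "A * (x - x1) + B * (y - y1) = 0" "A * (x2 - x1) + B * (y2 - y1) = 0"
      using assms(3,4) by (simp_all add: algebra_simps)
    moreover have "(x2 - x1, y2 - y1) \<noteq> (0, 0)"
      using assms(1) by auto
    ultimately obtain t where "x - x1 = t * (x2 - x1)" "y - y1 = t * (y2 - y1)"
      using parallel_if_common_normal assms(2) by blast
    then show "z \<in> line_through (x1, y1) (x2, y2)"
      by (auto simp: z line_through_def algebra_simps intro!: exI[of _ t])
  qed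
qed

lemma line_eq_neq_if_not_parallel:
  assumes "a1 * b2 \<noteq> a2 * b1"
  shows "line_eq a1 b1 c1 \<noteq> line_eq a2 b2 c2"
proof
  assume same: "line_eq a1 b1 c1 = line_eq a2 b2 c2"
  define x where "x = (c1 * b2 - c2 * b1) / (a1 * b2 - a2 * b1)"
  define y where "y = (a1 * c2 - a2 * c1) / (a1 * b2 - a2 * b1)"
  have "(x, y) \<in> line_eq a1 b1 c1"
    using assms by (simp add: line_eq_def x_def y_def field_simps)
  then have "(x, y) \<in> line_eq a2 b2 c2" "(x + b1, y - a1) \<in> line_eq a2 b2 c2"
    unfolding same[symmetric] by (simp_all add: line_eq_def algebra_simps)
  then have "a2 * b1 - b2 * a1 = 0"
    by (simp add: line_eq_def algebra_simps)
  then show False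
    using assms by (simp add: algebra_simps)
qed

lemma perp_bisector_eq_line_eq:
  "perp_bisector (x1, y1) (x2, y2) =
     line_eq (2 * (x2 - x1)) (2 * (y2 - y1)) (x2\<^sup>2 + y2\<^sup>2 - x1\<^sup>2 - y1\<^sup>2)"
proof -
  have dist_square: "(dist (x, y) (u, v))\<^sup>2 = (x - u)\<^sup>2 + (y - v)\<^sup>2" for x y u v :: real
    by (simp add: dist_point_eq)
  have "dist (x, y) (x1, y1) = dist (x, y) (x2, y2) \<longleftrightarrow>
      (dist (x, y) (x1, y1))\<^sup>2 = (dist (x, y) (x2, y2))\<^sup>2" for x y
    by (simp add: power2_eq_iff_nonneg)
  also have "\<dots> x y \<longleftrightarrow>
      2 * (x2 - x1) * x + 2 * (y2 - y1) * y = x2\<^sup>2 + y2\<^sup>2 - x1\<^sup>2 - y1\<^sup>2" for x y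
    unfolding dist_square by (simp add: power2_eq_square algebra_simps)
  finally show ?thesis
    by (auto simp: perp_bisector_def line_eq_def)
qed

lemma reflect_pt_involutive:
  assumes "(a, b) \<noteq> (0, 0)"
  shows "reflect_pt a b c (reflect_pt a b c z) = z"
proof -
  obtain x y where z: "z = (x, y)"
    by fastforce
  define t where "t = (a * x + b * y - c) / (a\<^sup>2 + b\<^sup>2)"
  have t: "(a\<^sup>2 + b\<^sup>2) * t = a * x + b * y - c"
    using assms by (auto simp: t_def)
  have "a * (x - 2 * a * t) + b * (y - 2 * b * t) - c = - ((a\<^sup>2 + b\<^sup>2) * t)"
    using t by (simp add: power2_eq_square algebra_simps)
  then have "(a * (x - 2 * a * t) + b * (y - 2 * b * t) - c) / (a\<^sup>2 + b\<^sup>2) = - t"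
    using assms by (auto simp: sum_power2_eq_zero_iff)
  then show ?thesis
    by (simp add: z reflect_pt_def Let_def flip: t_def)
qed

lemma real_subfield_abs_iff:
  assumes "real_subfield F"
  shows "\<bar>a\<bar> \<in> F \<longleftrightarrow> a \<in> F"
proof -
  have "0 - a \<in> F \<longleftrightarrow> a \<in> F"
    using assms unfolding real_subfield_def by (metis diff_0 diff_zero minus_diff_eq)
  then show ?thesis
    by (cases "a \<ge> 0") simp_all
qed

lemma real_subfield_sqrt_sum_squares:
  assumes F: "real_subfield F" and sqrt_closed: "\<forall>\<alpha>\<in>F. sqrt (1 + \<alpha>\<^sup>2) \<in> F"
    and "a \<in> F" "b \<in> F"
  shows "sqrt (a\<^sup>2 + b\<^sup>2) \<in> F"
proof (cases "a = 0")
  case True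
  then show ?thesis
    using F \<open>b \<in> F\<close> by (simp add: real_subfield_abs_iff)
next
  case False
  have "a\<^sup>2 + b\<^sup>2 = a\<^sup>2 * (1 + (b * inverse a)\<^sup>2)"
    using False by (simp add: field_simps power2_eq_square)
  then have "sqrt (a\<^sup>2 + b\<^sup>2) = \<bar>a\<bar> * sqrt (1 + (b * inverse a)\<^sup>2)"
    by (simp add: real_sqrt_mult)
  moreover have "\<bar>a\<bar> \<in> F" "b * inverse a \<in> F"
    using F \<open>a \<in> F\<close> \<open>b \<in> F\<close> False
    by (auto simp: real_subfield_abs_iff real_subfield_def)
  ultimately show ?thesis
    using F sqrt_closed by (simp add: real_subfield_def)
qed

lemma real_subfield_Inter:
  assumes "\<And>F. F \<in> \<F> \<Longrightarrow> real_subfield F"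
  shows "real_subfield (\<Inter>\<F>)"
  using assms unfolding real_subfield_def by blast

locale unit_origami_pair =
  fixes P :: "point set" and \<L> :: "point set set"
  assumes origami_pair: "origami_pair P \<L>"
    and origin_mem: "(0, 0) \<in> P" and unit_mem: "(0, 1) \<in> P"
begin

lemma intersection_mem:
  "L1 \<in> \<L> \<Longrightarrow> L2 \<in> \<L> \<Longrightarrow> L1 \<noteq> L2 \<Longrightarrow> p \<in> L1 \<Longrightarrow> p \<in> L2 \<Longrightarrow> p \<in> P"
  using origami_pair unfolding origami_pair_def by meson

lemma line_through_mem: "p \<in> P \<Longrightarrow> q \<in> P \<Longrightarrow> p \<noteq> q \<Longrightarrow> line_through p q \<in> \<L>"
  using origami_pair unfolding origami_pair_def by meson

lemma perp_bisector_mem: "p \<in> P \<Longrightarrow> q \<in> P \<Longrightarrow> p \<noteq> q \<Longrightarrow> perp_bisector p q \<in> \<L>"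
  using origami_pair unfolding origami_pair_def by meson

lemma equidistant_line_mem:
  "L1 \<in> \<L> \<Longrightarrow> L2 \<in> \<L> \<Longrightarrow> L1 \<noteq> L2 \<Longrightarrow> equidistant_line L1 L2 M \<Longrightarrow> M \<in> \<L>"
  using origami_pair unfolding origami_pair_def by meson

lemma reflect_image_mem:
  "line_eq a b c \<in> \<L> \<Longrightarrow> (a, b) \<noteq> (0, 0) \<Longrightarrow> L \<in> \<L> \<Longrightarrow> reflect_pt a b c ` L \<in> \<L>"
  using origami_pair unfolding origami_pair_def by (elim conjE) metis

lemma line_eq_mem_if_points_mem:
  assumes "(x1, y1) \<in> P" "(x2, y2) \<in> P" "(x1, y1) \<noteq> (x2, y2)" "(A, B) \<noteq> (0, 0)"
    and "A * x1 + B * y1 = C" "A * x2 + B * y2 = C"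
  shows "line_eq A B C \<in> \<L>"
  using line_through_mem[OF assms(1-3)] line_through_eq_line_eq[OF assms(3-6)] by simp

lemma perp_bisector_line_eq_mem:
  assumes "(x1, y1) \<in> P" "(x2, y2) \<in> P" "(x1, y1) \<noteq> (x2, y2)"
  shows "line_eq (2 * (x2 - x1)) (2 * (y2 - y1)) (x2\<^sup>2 + y2\<^sup>2 - x1\<^sup>2 - y1\<^sup>2) \<in> \<L>"
  using perp_bisector_mem[OF assms] by (simp add: perp_bisector_eq_line_eq)

lemma line_eq_intersection_mem:
  assumes "line_eq a1 b1 c1 \<in> \<L>" "line_eq a2 b2 c2 \<in> \<L>" "a1 * b2 \<noteq> a2 * b1"
    and "a1 * x + b1 * y = c1" "a2 * x + b2 * y = c2"
  shows "(x, y) \<in> P"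
  using intersection_mem[OF assms(1,2) line_eq_neq_if_not_parallel[OF assms(3)]] assms(4,5)
  by (simp add: line_eq_def)

lemma angle_bisector_mem:
  assumes L1: "line_eq a1 b1 c1 \<in> \<L>" and L2: "line_eq a2 b2 c2 \<in> \<L>"
    and crossing: "a1 * b2 \<noteq> a2 * b1" and "(A, B) \<noteq> (0, 0)"
    and equidistant: "\<And>x y. A * x + B * y = C \<Longrightarrow>
      \<bar>a1 * x + b1 * y - c1\<bar> / sqrt (a1\<^sup>2 + b1\<^sup>2) =
      \<bar>a2 * x + b2 * y - c2\<bar> / sqrt (a2\<^sup>2 + b2\<^sup>2)"
  shows "line_eq A B C \<in> \<L>"
proof (rule equidistant_line_mem[OF L1 L2 line_eq_neq_if_not_parallel[OF crossing]])
  have "(a1, b1) \<noteq> (0, 0)" "(a2, b2) \<noteq> (0, 0)"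
    using crossing by auto
  then have "infdist z (line_eq a1 b1 c1) = infdist z (line_eq a2 b2 c2)"
    if z_mem: "z \<in> line_eq A B C" for z
  proof -
    obtain x y where "z = (x, y)" "A * x + B * y = C"
      using z_mem by (auto simp: line_eq_def)
    then show ?thesis
      using equidistant infdist_line_eq[OF \<open>(a1, b1) \<noteq> (0, 0)\<close>]
        infdist_line_eq[OF \<open>(a2, b2) \<noteq> (0, 0)\<close>] by simp
  qed
  then show "equidistant_line (line_eq a1 b1 c1) (line_eq a2 b2 c2) (line_eq A B C)"
    using \<open>(A, B) \<noteq> (0, 0)\<close> by (auto simp: equidistant_line_def is_line_def)
qed

lemma y_axis_mem: "line_eq 1 0 0 \<in> \<L>"
  by (rule line_eq_mem_if_points_mem[OF origin_mem unit_mem]) auto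

lemma half_line_mem: "line_eq 0 2 1 \<in> \<L>"
  using perp_bisector_line_eq_mem[OF origin_mem unit_mem] by simp

lemma half_point_mem: "(0, 1/2) \<in> P"
  by (rule line_eq_intersection_mem[OF y_axis_mem half_line_mem]) auto

lemma quarter_line_mem: "line_eq 0 1 (1/4) \<in> \<L>"
  using perp_bisector_line_eq_mem[OF origin_mem half_point_mem] by (simp add: power2_eq_square)

lemma x_axis_mem: "line_eq 0 1 0 \<in> \<L>"
proof -
  have reflect: "reflect_pt 0 1 (1/4) (x, y) = (x, 1/2 - y)" for x y
    by (simp add: reflect_pt_def)
  have "reflect_pt 0 1 (1/4) ` line_eq 0 2 1 = line_eq 0 1 0"
  proof (intro equalityI subsetI)
    fix z assume "z \<in> line_eq 0 1 0"
    then obtain x where "z = (x, 0)"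
      by (auto simp: line_eq_def)
    then have "z = reflect_pt 0 1 (1/4) (x, 1/2)" "(x, 1/2) \<in> line_eq 0 2 1"
      by (simp_all add: reflect line_eq_def)
    then show "z \<in> reflect_pt 0 1 (1/4) ` line_eq 0 2 1"
      by blast
  qed (auto simp: reflect line_eq_def)
  then show ?thesis
    using reflect_image_mem[OF quarter_line_mem _ half_line_mem] by simp
qed

lemma diagonal_mem: "line_eq 1 (-1) 0 \<in> \<L>"
  by (rule angle_bisector_mem[OF x_axis_mem y_axis_mem]) auto

lemma off_axis_point_mem: "(1/2, 1/2) \<in> P"
  by (rule line_eq_intersection_mem[OF diagonal_mem half_line_mem]) auto

lemma two_lines_through:
  assumes "(x, y) \<in> P"
  obtains L1 L2 where "L1 \<in> \<L>" "L2 \<in> \<L>" "L1 \<noteq> L2" "(x, y) \<in> L1" "(x, y) \<in> L2"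
proof (cases "x = 0")
  case True
  have "line_eq (1/2 - y) (-1/2) (-y/2) \<in> \<L>"
    by (rule line_eq_mem_if_points_mem[OF assms off_axis_point_mem])
      (use True in \<open>auto simp: field_simps\<close>)
  moreover have "line_eq 1 0 0 \<noteq> line_eq (1/2 - y) (-1/2) (-y/2)"
    by (rule line_eq_neq_if_not_parallel) simp
  ultimately show thesis
    using that[OF y_axis_mem] True by (simp add: line_eq_def)
next
  case False
  have "line_eq y (-x) 0 \<in> \<L>"
    by (rule line_eq_mem_if_points_mem[OF assms origin_mem]) (use False in auto)
  moreover have "line_eq (y - 1) (-x) (-x) \<in> \<L>"
    by (rule line_eq_mem_if_points_mem[OF assms unit_mem]) (use False in \<open>auto simp: algebra_simps\<close>)
  moreover have "line_eq y (-x) 0 \<noteq> line_eq (y - 1) (-x) (-x)"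
    by (rule line_eq_neq_if_not_parallel) (use False in \<open>simp add: algebra_simps\<close>)
  ultimately show thesis
    using that by (simp add: line_eq_def algebra_simps)
qed

lemma reflect_pt_mem:
  assumes p: "p \<in> P" and M: "line_eq a b c \<in> \<L>" and ab: "(a, b) \<noteq> (0, 0)"
  shows "reflect_pt a b c p \<in> P"
proof -
  obtain L1 L2 where L: "L1 \<in> \<L>" "L2 \<in> \<L>" "L1 \<noteq> L2" "p \<in> L1" "p \<in> L2"
    using p two_lines_through[of "fst p" "snd p"] by auto
  have "inj (reflect_pt a b c)"
    by (rule inj_on_inverseI[where g = "reflect_pt a b c"]) (rule reflect_pt_involutive[OF ab])
  then have "reflect_pt a b c ` L1 \<noteq> reflect_pt a b c ` L2"
    using L(3) by (simp add: inj_image_eq_iff)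
  then show ?thesis
    using intersection_mem[OF reflect_image_mem[OF M ab L(1)] reflect_image_mem[OF M ab L(2)]] L(4,5)
    by blast
qed

lemma swap_mem: "(x, y) \<in> P \<Longrightarrow> (y, x) \<in> P"
  using reflect_pt_mem[OF _ diagonal_mem, of "(x, y)"] by (simp add: reflect_pt_def diff_divide_distrib)

lemma reflect_x_axis_mem: "(x, y) \<in> P \<Longrightarrow> (x, -y) \<in> P"
  using reflect_pt_mem[OF _ x_axis_mem, of "(x, y)"] by (simp add: reflect_pt_def)

lemma shift_up_mem: "(a, 0) \<in> P \<Longrightarrow> (a, 1) \<in> P"
  using reflect_pt_mem[OF _ half_line_mem, of "(a, 0)"] by (simp add: reflect_pt_def)

lemma fst_mem_axis:
  assumes "(x, y) \<in> P"
  shows "(x, 0) \<in> P"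
proof (cases "y = 0")
  case False
  have "line_eq 1 0 x \<in> \<L>"
    by (rule line_eq_mem_if_points_mem[OF assms reflect_x_axis_mem[OF assms]]) (use False in auto)
  then show ?thesis
    by (rule line_eq_intersection_mem[OF _ x_axis_mem]) auto
qed (use assms in simp)

lemma snd_mem_axis: "(x, y) \<in> P \<Longrightarrow> (y, 0) \<in> P"
  using fst_mem_axis swap_mem by blast

lemma vertical_line_mem: "(a, 0) \<in> P \<Longrightarrow> line_eq 1 0 a \<in> \<L>"
  by (rule line_eq_mem_if_points_mem[OF _ shift_up_mem]) auto

lemma axis_reflect_mem: "(a, 0) \<in> P \<Longrightarrow> (b, 0) \<in> P \<Longrightarrow> (2 * a - b, 0) \<in> P"
  using reflect_pt_mem[OF _ vertical_line_mem, of "(b, 0)" a] by (simp add: reflect_pt_def)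

lemma axis_midpoint_mem:
  assumes a: "(a, 0) \<in> P" and b: "(b, 0) \<in> P"
  shows "((a + b) / 2, 0) \<in> P"
proof (cases "a = b")
  case False
  have bisector: "line_eq (2 * (b - a)) 0 (b\<^sup>2 - a\<^sup>2) \<in> \<L>"
    using perp_bisector_line_eq_mem[OF a b] False by simp
  have on_bisector: "2 * (b - a) * ((a + b) / 2) + 0 * 0 = b\<^sup>2 - a\<^sup>2"
    by (simp add: power2_eq_square field_simps)
  show ?thesis
    by (rule line_eq_intersection_mem[OF bisector x_axis_mem _ on_bisector]) (use False in auto)
qed (use a in simp)

lemma axis_one_mem: "(1, 0) \<in> P"
  using swap_mem[OF unit_mem] .

lemma axis_uminus_mem: "(a, 0) \<in> P \<Longrightarrow> (- a, 0) \<in> P"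
  using axis_reflect_mem[OF origin_mem] by simp

lemma axis_add_mem:
  assumes "(a, 0) \<in> P" "(b, 0) \<in> P"
  shows "(a + b, 0) \<in> P"
proof -
  have "(2 * ((a + b) / 2) - 0, 0) \<in> P"
    by (rule axis_reflect_mem[OF axis_midpoint_mem[OF assms] origin_mem])
  then show ?thesis
    by (simp add: add_divide_distrib)
qed

lemma axis_diff_mem: "(a, 0) \<in> P \<Longrightarrow> (b, 0) \<in> P \<Longrightarrow> (a - b, 0) \<in> P"
  using axis_add_mem[OF _ axis_uminus_mem] by simp

lemma axis_mult_mem:
  assumes a: "(a, 0) \<in> P" and b: "(b, 0) \<in> P"
  shows "(a * b, 0) \<in> P"
proof -
  have "line_eq a (-1) 0 \<in> \<L>"
    by (rule line_eq_mem_if_points_mem[OF origin_mem swap_mem[OF shift_up_mem[OF a]]]) auto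
  then have "(b, a * b) \<in> P"
    by (rule line_eq_intersection_mem[OF _ vertical_line_mem[OF b]]) auto
  then show ?thesis
    by (rule snd_mem_axis)
qed

lemma axis_inverse_mem:
  assumes a: "(a, 0) \<in> P" and "a \<noteq> 0"
  shows "(inverse a, 0) \<in> P"
proof -
  have "line_eq 1 (-a) 0 \<in> \<L>"
    by (rule line_eq_mem_if_points_mem[OF origin_mem shift_up_mem[OF a]]) auto
  then have "(1, inverse a) \<in> P"
    by (rule line_eq_intersection_mem[OF _ vertical_line_mem[OF axis_one_mem]])
      (use \<open>a \<noteq> 0\<close> in auto)
  then show ?thesis
    by (rule snd_mem_axis)
qed

lemma axis_sqrt_one_plus_square_mem:
  assumes a: "(a, 0) \<in> P"
  shows "(sqrt (1 + a\<^sup>2), 0) \<in> P"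
proof (cases "a = 0")
  case True
  then show ?thesis
    using axis_one_mem by simp
next
  case False
  define r where "r = sqrt (1 + a\<^sup>2)"
  have "r > 0" and r_square: "r\<^sup>2 = 1 + a\<^sup>2"
    by (simp_all add: r_def add_pos_nonneg)
  have slope_line: "line_eq a (-1) 0 \<in> \<L>"
    by (rule line_eq_mem_if_points_mem[OF origin_mem swap_mem[OF shift_up_mem[OF a]]]) auto
  have bisector: "line_eq a (-(r + 1)) 0 \<in> \<L>"
  proof (rule angle_bisector_mem[OF x_axis_mem slope_line])
    fix x y assume "a * x + -(r + 1) * y = 0"
    then have "a * x + (-1) * y - 0 = r * y"
      by (simp add: algebra_simps)
    moreover have "sqrt (a\<^sup>2 + (-1)\<^sup>2) = r"
      by (simp add: r_def add.commute)
    ultimately show "\<bar>0 * x + 1 * y - 0\<bar> / sqrt (0\<^sup>2 + 1\<^sup>2) =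
        \<bar>a * x + (-1) * y - 0\<bar> / sqrt (a\<^sup>2 + (-1)\<^sup>2)"
      using \<open>r > 0\<close> by (simp add: abs_mult)
  qed (use False \<open>r > 0\<close> in auto)
  \<comment> \<open>(1, a) lies on the line y = a x at distance r from the origin.\<close>
  have "reflect_pt a (-(r + 1)) 0 (1, a) = (r, 0)"
  proof -
    have "r \<noteq> 0" "r + 1 \<noteq> 0"
      using \<open>r > 0\<close> by simp_all
    have denominator: "a\<^sup>2 + (-(r + 1))\<^sup>2 = r * (2 * (r + 1))"
      using r_square by (simp add: power2_eq_square algebra_simps)
    have numerator: "a * 1 + -(r + 1) * a - 0 = r * (- a)"
      by (simp add: algebra_simps)
    have t: "(a * 1 + -(r + 1) * a - 0) / (a\<^sup>2 + (-(r + 1))\<^sup>2) = - a / (2 * (r + 1))"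
      unfolding numerator denominator
      by (rule nonzero_mult_divide_mult_cancel_left[OF \<open>r \<noteq> 0\<close>])
    have "1 - 2 * a * (- a / (2 * (r + 1))) = r"
      using \<open>r + 1 \<noteq> 0\<close> r_square by (simp add: field_simps power2_eq_square)
    moreover have "a - 2 * (-(r + 1)) * (- a / (2 * (r + 1))) = 0"
      using \<open>r + 1 \<noteq> 0\<close> by (simp add: field_simps)
    ultimately show ?thesis
      unfolding reflect_pt_def Let_def fst_conv snd_conv t by simp
  qed
  then show ?thesis
    using reflect_pt_mem[OF swap_mem[OF shift_up_mem[OF a]] bisector] \<open>r > 0\<close>
    by (simp add: r_def)
qed

lemma real_subfield_axis: "real_subfield {a. (a, 0) \<in> P}"
  unfolding real_subfield_def
  using origin_mem axis_one_mem axis_add_mem axis_diff_mem axis_mult_mem axis_inverse_mem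
  by simp

lemma dist_mem_axis:
  assumes "(x1, y1) \<in> P" "(x2, y2) \<in> P"
  shows "(dist (x1, y1) (x2, y2), 0) \<in> P"
proof -
  have "(x1 - x2, 0) \<in> P" "(y1 - y2, 0) \<in> P"
    using assms by (auto intro: axis_diff_mem fst_mem_axis snd_mem_axis)
  then have "sqrt ((x1 - x2)\<^sup>2 + (y1 - y2)\<^sup>2) \<in> {a. (a, 0) \<in> P}"
    by (intro real_subfield_sqrt_sum_squares[OF real_subfield_axis])
      (simp_all add: axis_sqrt_one_plus_square_mem)
  then show ?thesis
    by (simp add: dist_point_eq)
qed

end

lemma origami_points_eq: "origami_points = \<Inter>{P. \<exists>\<L>. unit_origami_pair P \<L>}"
  by (auto simp: origami_points_def origami_closed_def unit_origami_pair_def)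

lemma origami_numbers_eq:
  "origami_numbers = \<Inter>{{\<alpha>. (\<alpha>, 0) \<in> P} | P \<L>. unit_origami_pair P \<L>}"
proof (intro equalityI subsetI)
  fix \<alpha> assume "\<alpha> \<in> origami_numbers"
  then obtain x1 y1 x2 y2
    where points: "(x1, y1) \<in> origami_points" "(x2, y2) \<in> origami_points"
    and \<alpha>: "\<bar>\<alpha>\<bar> = dist (x1, y1) (x2, y2)"
    by (auto simp: origami_numbers_def)
  have "(\<alpha>, 0) \<in> P" if "unit_origami_pair P \<L>" for P \<L>
  proof -
    interpret unit_origami_pair P \<L>
      by (fact that)
    have "(x1, y1) \<in> P" "(x2, y2) \<in> P"
      using points that by (auto simp: origami_points_eq)
    then have "(\<bar>\<alpha>\<bar>, 0) \<in> P"
      using \<alpha> dist_mem_axis by simp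
    then show ?thesis
      using real_subfield_abs_iff[OF real_subfield_axis] by simp
  qed
  then show "\<alpha> \<in> \<Inter>{{\<alpha>. (\<alpha>, 0) \<in> P} | P \<L>. unit_origami_pair P \<L>}"
    by blast
next
  fix \<alpha> assume "\<alpha> \<in> \<Inter>{{\<alpha>. (\<alpha>, 0) \<in> P} | P \<L>. unit_origami_pair P \<L>}"
  then have "(\<alpha>, 0) \<in> origami_points" "(0, 0) \<in> origami_points"
    by (auto simp: origami_points_eq unit_origami_pair.origin_mem)
  moreover have "\<bar>\<alpha>\<bar> = dist (\<alpha>, 0 :: real) (0, 0)"
    by (simp add: dist_point_eq)
  ultimately show "\<alpha> \<in> origami_numbers"
    unfolding origami_numbers_def by blast
qed

theorem mainTheorem3:
  shows "real_subfield origami_numbers \<and>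
         (\<forall>\<alpha>\<in>origami_numbers. sqrt (1 + \<alpha>\<^sup>2) \<in> origami_numbers)"
proof
  show "real_subfield origami_numbers"
    unfolding origami_numbers_eq
    by (rule real_subfield_Inter) (auto dest: unit_origami_pair.real_subfield_axis)
  show "\<forall>\<alpha>\<in>origami_numbers. sqrt (1 + \<alpha>\<^sup>2) \<in> origami_numbers"
    unfolding origami_numbers_eq
    by (auto dest: unit_origami_pair.axis_sqrt_one_plus_square_mem)
qed

end
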